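(* Let $\mathcal A$ be an uncountable almost disjoint family on a countable set $W$. If $\mathcal A$ is Luzin then $\mathcal A$ is near-Luzin.
   Context: An almost disjoint family is a collection of infinite sets whose pairwise intersections are finite. $\mathcal A$ is Luzin iff there is an enumeration $\mathcal A=\{a_\alpha:\alpha<\omega_1\}$ such that for every finite $w\subseteq W$ and every $\alpha<\omega_1$ the set $\{\beta<\alpha: a_\alpha\cap a_\beta\subseteq w\}$ is finite. $\mathcal A$ is near-Luzin iff for all uncountable $\mathcal C,\mathcal D\subseteq\mathcal A$ the set $\bigcup\mathcal C\cap\bigcup\mathcal D$ is infinite. *)

theory Defs
  imports Main "HOL-Library.Countable_Set"
begin

text \<open>The first uncountable ordinal, as the well-order cardSuc natLeq (successor cardinal of omega).
  Its field is the set of ordinals below omega_1; strict order is the relation minus the diagonal.\<close>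

abbreviation omega1 :: "nat set rel" where
  "omega1 \<equiv> cardSuc natLeq"

abbreviation omega1_less :: "nat set \<Rightarrow> nat set \<Rightarrow> bool" where
  "omega1_less \<beta> \<alpha> \<equiv> (\<beta>, \<alpha>) \<in> omega1 \<and> \<beta> \<noteq> \<alpha>"

definition almost_disjoint :: "'a set \<Rightarrow> 'a set set \<Rightarrow> bool" where
  "almost_disjoint W \<A> \<longleftrightarrow>
     (\<forall>a\<in>\<A>. a \<subseteq> W \<and> infinite a) \<and>
     (\<forall>a\<in>\<A>. \<forall>b\<in>\<A>. a \<noteq> b \<longrightarrow> finite (a \<inter> b))"

definition luzin :: "'a set \<Rightarrow> 'a set set \<Rightarrow> bool" where
  "luzin W \<A> \<longleftrightarrow>
     (\<exists>a :: nat set \<Rightarrow> 'a set. bij_betw a (Field omega1) \<A> \<and>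
        (\<forall>w. finite w \<and> w \<subseteq> W \<longrightarrow>
           (\<forall>\<alpha>\<in>Field omega1.
              finite {\<beta>\<in>Field omega1. omega1_less \<beta> \<alpha> \<and> a \<alpha> \<inter> a \<beta> \<subseteq> w})))"

definition near_luzin :: "'a set set \<Rightarrow> bool" where
  "near_luzin \<A> \<longleftrightarrow>
     (\<forall>\<C> \<D>. \<C> \<subseteq> \<A> \<and> \<D> \<subseteq> \<A> \<and> uncountable \<C> \<and> uncountable \<D> \<longrightarrow>
        infinite (\<Union>\<C> \<inter> \<Union>\<D>))"

end

theory Submission
  imports Defs "HOL-Library.Countable_Set_Type"
begin

text \<open>Suppose \<open>\<Union>\<C> \<inter> \<Union>\<D>\<close> were a finite set \<open>w\<close>. Every proper initial segment of \<open>\<omega>\<^sub>1\<close>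
  is countable, so above any countably infinite set \<open>S\<close> of indices of members of \<open>\<C>\<close> there is
  the index \<open>\<alpha>\<close> of a member of \<open>\<D>\<close>. Then \<open>a\<^sub>\<alpha> \<inter> a\<^sub>\<beta> \<subseteq> w\<close> for the infinitely many
  \<open>\<beta> \<in> S\<close> below \<open>\<alpha>\<close>, contradicting the Luzin property of the enumeration.\<close>

lemma countable_underS_omega1:
  includes cardinal_syntax
  assumes "x \<in> Field omega1"
  shows "countable (underS omega1 x)"
proof -
  have "|underS omega1 x| <o omega1"
    by (rule card_of_underS[OF cardSuc_Card_order[OF natLeq_Card_order] assms])
  then have "|underS omega1 x| \<le>o natLeq"
    using cardSuc_ordLeq_ordLess[OF natLeq_Card_order card_of_Card_order] by blast
  then show ?thesis
    using countable_card_le_natLeq by blast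
qed

lemma omega1_total:
  assumes "x \<in> Field omega1" "y \<in> Field omega1" "x \<noteq> y"
  shows "(x, y) \<in> omega1 \<or> (y, x) \<in> omega1"
proof -
  have "total_on (Field omega1) omega1"
    using cardSuc_Well_order[OF natLeq_Card_order]
    unfolding well_order_on_def linear_order_on_def by blast
  then show ?thesis
    using assms unfolding total_on_def by blast
qed

lemma omega1_strict_upper_bound:
  assumes "countable S" "S \<subseteq> Field omega1" "uncountable T" "T \<subseteq> Field omega1"
  obtains \<alpha> where "\<alpha> \<in> T" "\<And>\<beta>. \<beta> \<in> S \<Longrightarrow> omega1_less \<beta> \<alpha>"
proof -
  have "countable (S \<union> (\<Union>s\<in>S. underS omega1 s))"
    using assms(1,2) countable_underS_omega1 by blast
  then have "\<not> T \<subseteq> S \<union> (\<Union>s\<in>S. underS omega1 s)"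
    using assms(3) countable_subset by blast
  then obtain \<alpha> where \<alpha>: "\<alpha> \<in> T" "\<alpha> \<notin> S" "\<And>s. s \<in> S \<Longrightarrow> \<alpha> \<notin> underS omega1 s"
    by blast
  have "omega1_less \<beta> \<alpha>" if "\<beta> \<in> S" for \<beta>
  proof -
    have "\<beta> \<noteq> \<alpha>"
      using that \<alpha>(2) by blast
    then show ?thesis
      using omega1_total[of \<beta> \<alpha>] \<alpha> that assms(2,4) unfolding underS_def by blast
  qed
  with \<alpha>(1) show ?thesis
    using that by blast
qed

lemma luzin_uncountable_meet_not_subset:
  assumes "luzin W \<A>" and "\<C> \<subseteq> \<A>" "\<D> \<subseteq> \<A>" "uncountable \<C>" "uncountable \<D>"
    and "finite w" "w \<subseteq> W"
  obtains c d where "c \<in> \<C>" "d \<in> \<D>" "\<not> c \<inter> d \<subseteq> w"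
proof -
  obtain a where a: "bij_betw a (Field omega1) \<A>"
    and luzin: "\<forall>w. finite w \<and> w \<subseteq> W \<longrightarrow> (\<forall>\<alpha>\<in>Field omega1.
      finite {\<beta>\<in>Field omega1. omega1_less \<beta> \<alpha> \<and> a \<alpha> \<inter> a \<beta> \<subseteq> w})"
    using assms(1) unfolding luzin_def by blast
  have finite_below: "finite {\<beta>\<in>Field omega1. omega1_less \<beta> \<alpha> \<and> a \<alpha> \<inter> a \<beta> \<subseteq> w}"
    if "\<alpha> \<in> Field omega1" for \<alpha>
    using luzin assms(6,7) that by blast
  define index where "index \<E> = {\<beta>\<in>Field omega1. a \<beta> \<in> \<E>}" for \<E>
  have index_uncountable: "uncountable (index \<E>)" if "\<E> \<subseteq> \<A>" "uncountable \<E>" for \<E>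
  proof -
    have "a ` index \<E> = \<E>"
      using a that(1) unfolding index_def bij_betw_def by force
    then show ?thesis
      using that(2) countable_image by metis
  qed
  have "infinite (index \<C>)"
    using index_uncountable[OF assms(2,4)] countable_finite by blast
  then obtain S where S: "S \<subseteq> index \<C>" "countable S" "infinite S"
    using infinite_countable_subset' by blast
  have "S \<subseteq> Field omega1" "index \<D> \<subseteq> Field omega1"
    using S(1) unfolding index_def by auto
  then obtain \<alpha> where \<alpha>: "\<alpha> \<in> index \<D>" "\<And>\<beta>. \<beta> \<in> S \<Longrightarrow> omega1_less \<beta> \<alpha>"
    using omega1_strict_upper_bound[OF S(2) _ index_uncountable[OF assms(3,5)]] by blast
  show ?thesis
  proof (rule ccontr)
    assume "\<not> ?thesis"
    then have "S \<subseteq> {\<beta>\<in>Field omega1. omega1_less \<beta> \<alpha> \<and> a \<alpha> \<inter> a \<beta> \<subseteq> w}"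
      using that S(1) \<alpha> unfolding index_def by blast
    moreover have "\<alpha> \<in> Field omega1"
      using \<alpha>(1) unfolding index_def by blast
    ultimately show False
      using finite_below S(3) finite_subset by blast
  qed
qed

theorem claim0p4:
  fixes W :: "'a set" and \<A> :: "'a set set"
  assumes "countable W"
    and "uncountable \<A>"
    and "almost_disjoint W \<A>"
    and "luzin W \<A>"
  shows "near_luzin \<A>"
  unfolding near_luzin_def
proof (intro allI impI notI)
  fix \<C> \<D>
  assume CD: "\<C> \<subseteq> \<A> \<and> \<D> \<subseteq> \<A> \<and> uncountable \<C> \<and> uncountable \<D>"
    and finite_meet: "finite (\<Union>\<C> \<inter> \<Union>\<D>)"
  have "\<Union>\<C> \<inter> \<Union>\<D> \<subseteq> W"
    using CD assms(3) unfolding almost_disjoint_def by blast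
  then obtain c d where "c \<in> \<C>" "d \<in> \<D>" "\<not> c \<inter> d \<subseteq> \<Union>\<C> \<inter> \<Union>\<D>"
    using luzin_uncountable_meet_not_subset[OF assms(4)] CD finite_meet by metis
  then show False
    by blast
qed

end
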